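(* For every integer $k\ge 1$, there is a protocol solving MEQ-AD$(3,2^k)$ in which every transmitted symbol is a single bit and the total number of transmitted bits is $3\lceil \lceil k\log_6 2\rceil \log_2 3\rceil$; this number is less than $1.840k+7.755$.
   Context: There are $n$ nodes labeled $1,\dots,n$ (here $n=3$); node $i$ privately holds an input $x_i\in\{1,\dots,M\}$ (here $M=2^k$). Communication is over private point-to-point links of a fully connected synchronous network. A deterministic protocol $P$ is a fixed finite schedule of steps $l=1,\dots,L(P)$; in step $l$ a prescribed node $T_l$ sends to a prescribed node $R_l\neq T_l$ one symbol $f_l(x_{T_l},T_l^+(l))$, where $T_l^+(l)$ is the sequence of symbols $T_l$ has received in steps $1,\dots,l-1$; only $R_l$ receives it. At the end each node $i$ outputs a bit $EQ_i$ depending on $x_i$ and the symbols it received. $P$ solves MEQ-AD$(n,M)$ if for every input, $EQ_1=\cdots=EQ_n=0$ iff $x_1=\cdots=x_n$. *)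

theory Defs
  imports Complex_Main
begin

text \<open>A step of a deterministic protocol in which every symbol is a single bit:
  (sender T, receiver R, message function f). The sender transmits
  f (own input) (sequence of symbols it has received so far).\<close>
type_synonym bit_step = "nat \<times> nat \<times> (nat \<Rightarrow> bool list \<Rightarrow> bool)"

definition valid_protocol :: "nat \<Rightarrow> bit_step list \<Rightarrow> bool" where
  "valid_protocol n P \<longleftrightarrow>
     (\<forall>(T, R, f) \<in> set P. T \<in> {1..n} \<and> R \<in> {1..n} \<and> T \<noteq> R)"

definition exec_step ::
  "(nat \<Rightarrow> nat) \<Rightarrow> (nat \<Rightarrow> bool list) \<Rightarrow> bit_step \<Rightarrow> (nat \<Rightarrow> bool list)" where
  "exec_step x st s = (case s of (T, R, f) \<Rightarrow> st(R := st R @ [f (x T) (st T)]))"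

definition received :: "bit_step list \<Rightarrow> (nat \<Rightarrow> nat) \<Rightarrow> nat \<Rightarrow> bool list" where
  "received P x = fold (\<lambda>s st. exec_step x st s) P (\<lambda>_. [])"

text \<open>Protocol P with output functions EQ (EQ i (x i) (received symbols); True = bit 1)
  solves MEQ-AD(n, M).\<close>
definition solves_MEQ_AD ::
  "nat \<Rightarrow> nat \<Rightarrow> bit_step list \<Rightarrow> (nat \<Rightarrow> nat \<Rightarrow> bool list \<Rightarrow> bool) \<Rightarrow> bool" where
  "solves_MEQ_AD n M P EQ \<longleftrightarrow> valid_protocol n P \<and>
     (\<forall>x :: nat \<Rightarrow> nat. (\<forall>i\<in>{1..n}. x i \<in> {1..M}) \<longrightarrow>
        ((\<forall>i\<in>{1..n}. \<not> EQ i (x i) (received P x i)) \<longleftrightarrow>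
         (\<forall>i\<in>{1..n}. \<forall>j\<in>{1..n}. x i = x j)))"

end

theory Submission
  imports Defs "HOL-Number_Theory.Cong"
begin

text \<open>Write an input \<open>a < 6^m\<close> as \<open>a = 3^m r + q\<close> with \<open>r < 2^m\<close>, \<open>q < 3^m\<close>, and let \<open>p\<close> be
  the number whose ternary digits are the binary digits of \<open>r\<close>; then \<open>2 p < 3^m\<close>, and the
  possible values of \<open>p\<close> contain no three-term arithmetic progression. Around the cycle
  1 \<open>\<rightarrow>\<close> 2 \<open>\<rightarrow>\<close> 3 \<open>\<rightarrow>\<close> 1 the nodes send \<open>q\<close>, \<open>q + p\<close> and \<open>q + 2 p\<close> (mod \<open>3^m\<close>) of their own
  inputs, and each receiver compares with the same quantity for its own input. If nobody
  objects, summing the three congruences gives \<open>p\<^sub>2 + p\<^sub>3 \<equiv> 2 p\<^sub>1\<close> (mod \<open>3^m\<close>), an equality since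
  all \<open>p\<^sub>i < 3^m/2\<close>; hence \<open>p\<^sub>1 = p\<^sub>2 = p\<^sub>3\<close>, and then the \<open>q\<close>'s agree as well. Each message needs
  \<open>b\<close> bits with \<open>3^m \<le> 2^b\<close>, and \<open>m = \<lceil>k log\<^sub>6 2\<rceil>\<close> ensures \<open>2^k \<le> 6^m\<close>.\<close>

section \<open>Binary digits read in base three\<close>

fun binary_as_ternary :: "nat \<Rightarrow> nat \<Rightarrow> nat" where
  "binary_as_ternary 0 x = 0"
| "binary_as_ternary (Suc m) x = x mod 2 + 3 * binary_as_ternary m (x div 2)"

lemma binary_as_ternary_less: "2 * binary_as_ternary m x < 3 ^ m"
proof (induction m arbitrary: x)
  case 0
  then show ?case by simp
next
  case (Suc m)
  have "2 * binary_as_ternary m (x div 2) + 1 \<le> 3 ^ m"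
    using Suc.IH[of "x div 2"] by simp
  moreover have "x mod 2 \<le> 1" by simp
  ultimately show ?case by simp
qed

lemma binary_as_ternary_inj:
  assumes "x < 2 ^ m" "y < 2 ^ m" "binary_as_ternary m x = binary_as_ternary m y"
  shows "x = y"
  using assms
proof (induction m arbitrary: x y)
  case 0
  then show ?case by simp
next
  case (Suc m)
  let ?t = "binary_as_ternary m"
  have eq: "x mod 2 + 3 * ?t (x div 2) = y mod 2 + 3 * ?t (y div 2)"
    using Suc.prems(3) by simp
  then have "x mod 2 mod 3 = y mod 2 mod 3"
    by (metis mod_mult_self2)
  then have low: "x mod 2 = y mod 2" by simp
  with eq have "?t (x div 2) = ?t (y div 2)" by simp
  moreover have "x div 2 < 2 ^ m" "y div 2 < 2 ^ m" using Suc.prems(1,2) by auto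
  ultimately have "x div 2 = y div 2" using Suc.IH by blast
  with low show ?case by (metis div_mult_mod_eq)
qed

lemma binary_digits_midpoint:
  fixes a b c :: nat
  assumes "a \<le> 1" "b \<le> 1" "c \<le> 1" "a + b + 3 * X = 2 * c + 3 * Y"
  shows "a = c \<and> b = c"
proof -
  have "(a + b) mod 3 = (2 * c) mod 3"
    using arg_cong[OF assms(4), of "\<lambda>n. n mod 3"] by (metis mod_mult_self2)
  moreover have "a = 0 \<or> a = 1" "b = 0 \<or> b = 1" "c = 0 \<or> c = 1" using assms(1-3) by auto
  ultimately show ?thesis by (elim disjE) simp_all
qed

lemma binary_as_ternary_midpoint:
  assumes "binary_as_ternary m x + binary_as_ternary m y = 2 * binary_as_ternary m z"
  shows "binary_as_ternary m x = binary_as_ternary m z \<and> binary_as_ternary m y = binary_as_ternary m z"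
  using assms
proof (induction m arbitrary: x y z)
  case 0
  then show ?case by simp
next
  case (Suc m)
  let ?t = "binary_as_ternary m"
  have "x mod 2 + y mod 2 + 3 * (?t (x div 2) + ?t (y div 2)) = 2 * (z mod 2) + 3 * (2 * ?t (z div 2))"
    using Suc.prems by (simp add: algebra_simps)
  from binary_digits_midpoint[OF _ _ _ this]
  have low: "x mod 2 = z mod 2 \<and> y mod 2 = z mod 2" by simp
  with Suc.prems have "?t (x div 2) + ?t (y div 2) = 2 * ?t (z div 2)" by simp
  then have "?t (x div 2) = ?t (z div 2) \<and> ?t (y div 2) = ?t (z div 2)" by (rule Suc.IH)
  with low show ?case by simp
qed

section \<open>The residue code\<close>

definition residue_code :: "nat \<Rightarrow> nat \<Rightarrow> nat \<Rightarrow> nat" where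
  "residue_code j m a = (a mod 3 ^ m + j * binary_as_ternary m (a div 3 ^ m)) mod 3 ^ m"

lemma residue_code_less: "residue_code j m a < 3 ^ m"
  by (simp add: residue_code_def)

lemma three_residues_midpoint:
  fixes N q\<^sub>1 q\<^sub>2 q\<^sub>3 p\<^sub>1 p\<^sub>2 p\<^sub>3 :: nat
  assumes "2 * p\<^sub>1 < N" "2 * p\<^sub>2 < N" "2 * p\<^sub>3 < N"
    and "q\<^sub>1 = q\<^sub>2"
    and "[q\<^sub>2 + p\<^sub>2 = q\<^sub>3 + p\<^sub>3] (mod N)"
    and "[q\<^sub>3 + 2 * p\<^sub>3 = q\<^sub>1 + 2 * p\<^sub>1] (mod N)"
  shows "p\<^sub>2 + p\<^sub>3 = 2 * p\<^sub>1"
proof (rule ccontr)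
  have "int N dvd int (q\<^sub>2 + p\<^sub>2) - int (q\<^sub>3 + p\<^sub>3)"
    "int N dvd int (q\<^sub>3 + 2 * p\<^sub>3) - int (q\<^sub>1 + 2 * p\<^sub>1)"
    using assms(5,6) by (simp_all add: cong_iff_dvd_diff flip: cong_int_iff)
  from dvd_add[OF this] assms(4) have dvd: "int N dvd int p\<^sub>2 + int p\<^sub>3 - 2 * int p\<^sub>1"
    by (simp add: algebra_simps)
  assume "p\<^sub>2 + p\<^sub>3 \<noteq> 2 * p\<^sub>1"
  then have "int p\<^sub>2 + int p\<^sub>3 - 2 * int p\<^sub>1 \<noteq> 0" by linarith
  from dvd_imp_le_int[OF this dvd] have "int N \<le> \<bar>int p\<^sub>2 + int p\<^sub>3 - 2 * int p\<^sub>1\<bar>" by simp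
  with assms(1-3) show False by linarith
qed

lemma residue_code_separating:
  assumes "a\<^sub>1 < 6 ^ m" "a\<^sub>2 < 6 ^ m" "a\<^sub>3 < 6 ^ m"
    and "residue_code 0 m a\<^sub>1 = residue_code 0 m a\<^sub>2"
    and "residue_code 1 m a\<^sub>2 = residue_code 1 m a\<^sub>3"
    and "residue_code 2 m a\<^sub>3 = residue_code 2 m a\<^sub>1"
  shows "a\<^sub>1 = a\<^sub>2 \<and> a\<^sub>2 = a\<^sub>3"
proof -
  define N :: nat where "N = 3 ^ m"
  define q where "q a = a mod N" for a
  define p where "p a = binary_as_ternary m (a div N)" for a
  have code: "residue_code j m a = (q a + j * p a) mod N" for j a
    by (simp add: residue_code_def N_def q_def p_def)
  have p_less: "2 * p a < N" for a
    by (simp add: p_def N_def binary_as_ternary_less)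
  have q12: "q a\<^sub>1 = q a\<^sub>2" using assms(4) by (simp add: code q_def)
  have "p a\<^sub>2 + p a\<^sub>3 = 2 * p a\<^sub>1"
    by (rule three_residues_midpoint[OF p_less p_less p_less q12])
      (use assms(5,6) in \<open>simp_all add: code cong_def\<close>)
  then have p_eq: "p a\<^sub>2 = p a\<^sub>1" "p a\<^sub>3 = p a\<^sub>1"
    unfolding p_def by (auto dest: binary_as_ternary_midpoint)
  have "(6::nat) ^ m = 2 ^ m * N" by (simp add: N_def flip: power_mult_distrib)
  then have "a div N < 2 ^ m" if "a < 6 ^ m" for a
    using that by (simp add: less_mult_imp_div_less)
  with assms(1-3) p_eq have div_eq: "a\<^sub>2 div N = a\<^sub>1 div N" "a\<^sub>3 div N = a\<^sub>1 div N"
    unfolding p_def by (auto intro: binary_as_ternary_inj)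
  have "[q a\<^sub>2 + p a\<^sub>1 = q a\<^sub>3 + p a\<^sub>1] (mod N)"
    using assms(5) p_eq by (simp add: code cong_def)
  then have "[q a\<^sub>2 = q a\<^sub>3] (mod N)" by (simp only: cong_add_rcancel_nat)
  then have "q a\<^sub>2 = q a\<^sub>3" by (simp add: cong_def q_def)
  with q12 div_eq show ?thesis unfolding q_def by (metis div_mult_mod_eq)
qed

section \<open>Cyclic bit protocols on three nodes\<close>

lemma map_bit_upt_eq_iff:
  fixes v w :: nat
  assumes "v < 2 ^ b" "w < 2 ^ b"
  shows "map (bit v) [0..<b] = map (bit w) [0..<b] \<longleftrightarrow> v = w"
proof
  assume bits: "map (bit v) [0..<b] = map (bit w) [0..<b]"
  show "v = w"
  proof (rule bit_eqI)
    fix n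
    show "bit v n = bit w n"
    proof (cases "n < b")
      case True
      with bits show ?thesis by simp
    next
      case False
      with assms show ?thesis by (metis bit_take_bit_iff take_bit_nat_eq_self_iff)
    qed
  qed
qed simp

lemma received_history_independent:
  assumes "\<forall>(T, R, f) \<in> set P. \<forall>a r. f a r = f a []"
  shows "received P x i = map (\<lambda>(T, R, f). f (x T) []) (filter (\<lambda>(T, R, f). R = i) P)"
proof -
  have "fold (\<lambda>s st. exec_step x st s) P st =
      (\<lambda>i. st i @ map (\<lambda>(T, R, f). f (x T) []) (filter (\<lambda>(T, R, f). R = i) P))" for st
    using assms
  proof (induction P arbitrary: st)
    case Nil
    then show ?case by simp
  next
    case (Cons s P)
    obtain T R f where s: "s = (T, R, f)" by (cases s)
    with Cons.prems have f: "f (x T) (st T) = f (x T) []" by auto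
    have "fold (\<lambda>s st. exec_step x st s) (s # P) st =
        (\<lambda>i. exec_step x st s i @ map (\<lambda>(T, R, f). f (x T) []) (filter (\<lambda>(T, R, f). R = i) P))"
      using Cons by simp
    also have "\<dots> = (\<lambda>i. st i @ map (\<lambda>(T, R, f). f (x T) []) (filter (\<lambda>(T, R, f). R = i) (s # P)))"
      by (rule ext) (auto simp: exec_step_def s f)
    finally show ?case .
  qed
  then show ?thesis by (simp add: received_def)
qed

definition send_bits :: "nat \<Rightarrow> nat \<Rightarrow> nat \<Rightarrow> (nat \<Rightarrow> nat) \<Rightarrow> bit_step list" where
  "send_bits b T R g = map (\<lambda>t. (T, R, \<lambda>a _. bit (g a) t)) [0..<b]"

definition cycle_protocol :: "nat \<Rightarrow> (nat \<Rightarrow> nat \<Rightarrow> nat) \<Rightarrow> bit_step list" where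
  "cycle_protocol b g = send_bits b 1 2 (g 1) @ send_bits b 2 3 (g 2) @ send_bits b 3 1 (g 3)"

definition cycle_predecessor :: "nat \<Rightarrow> nat" where
  "cycle_predecessor i = (if i = 1 then 3 else i - 1)"

definition cycle_output :: "nat \<Rightarrow> (nat \<Rightarrow> nat \<Rightarrow> nat) \<Rightarrow> nat \<Rightarrow> nat \<Rightarrow> bool list \<Rightarrow> bool" where
  "cycle_output b g i a r \<longleftrightarrow> r \<noteq> map (bit (g (cycle_predecessor i) a)) [0..<b]"

lemma length_cycle_protocol: "length (cycle_protocol b g) = 3 * b"
  by (simp add: cycle_protocol_def send_bits_def)

lemma received_cycle_protocol:
  assumes "i \<in> {1..3}"
  shows "received (cycle_protocol b g) x i =
    map (bit (g (cycle_predecessor i) (x (cycle_predecessor i)))) [0..<b]"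
proof -
  have "\<forall>(T, R, f) \<in> set (cycle_protocol b g). \<forall>a r. f a r = f a []"
    by (auto simp: cycle_protocol_def send_bits_def)
  note received = received_history_independent[OF this]
  from assms have "i = 1 \<or> i = 2 \<or> i = 3" by auto
  then show ?thesis unfolding received
    by (elim disjE) (simp_all add: cycle_protocol_def send_bits_def
        cycle_predecessor_def filter_map o_def)
qed

lemma solves_cycle_protocol:
  assumes "\<And>j a. g j a < 2 ^ b"
    and "\<And>a\<^sub>1 a\<^sub>2 a\<^sub>3. a\<^sub>1 \<in> {1..M} \<Longrightarrow> a\<^sub>2 \<in> {1..M} \<Longrightarrow> a\<^sub>3 \<in> {1..M} \<Longrightarrow>
      g 1 a\<^sub>1 = g 1 a\<^sub>2 \<Longrightarrow> g 2 a\<^sub>2 = g 2 a\<^sub>3 \<Longrightarrow> g 3 a\<^sub>3 = g 3 a\<^sub>1 \<Longrightarrow> a\<^sub>1 = a\<^sub>2 \<and> a\<^sub>2 = a\<^sub>3"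
  shows "solves_MEQ_AD 3 M (cycle_protocol b g) (cycle_output b g)"
proof -
  have nodes: "{1..3::nat} = {1, 2, 3}" by auto
  have accepts: "\<not> cycle_output b g i (x i) (received (cycle_protocol b g) x i) \<longleftrightarrow>
      g (cycle_predecessor i) (x (cycle_predecessor i)) = g (cycle_predecessor i) (x i)"
    if "i \<in> {1..3}" for x i
    using map_bit_upt_eq_iff[OF assms(1) assms(1)]
    by (simp add: cycle_output_def received_cycle_protocol[OF that] del: map_eq_conv)
  have "(\<forall>i\<in>{1..3}. \<not> cycle_output b g i (x i) (received (cycle_protocol b g) x i)) \<longleftrightarrow>
      (\<forall>i\<in>{1..3}. \<forall>j\<in>{1..3}. x i = x j)"
    if "\<forall>i\<in>{1..3}. x i \<in> {1..M}" for x
  proof -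
    have "(\<forall>i\<in>{1..3}. \<not> cycle_output b g i (x i) (received (cycle_protocol b g) x i)) \<longleftrightarrow>
        g 3 (x 3) = g 3 (x 1) \<and> g 1 (x 1) = g 1 (x 2) \<and> g 2 (x 2) = g 2 (x 3)"
      by (simp only: nodes ball_simps) (simp add: accepts cycle_predecessor_def)
    also have "\<dots> \<longleftrightarrow> x 1 = x 2 \<and> x 2 = x 3"
      using assms(2)[of "x 1" "x 2" "x 3"] that by (auto simp: nodes)
    also have "\<dots> \<longleftrightarrow> (\<forall>i\<in>{1..3}. \<forall>j\<in>{1..3}. x i = x j)"
      unfolding nodes by auto
    finally show ?thesis .
  qed
  moreover have "valid_protocol 3 (cycle_protocol b g)"
    by (auto simp: valid_protocol_def cycle_protocol_def send_bits_def)
  ultimately show ?thesis by (simp add: solves_MEQ_AD_def)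
qed

definition residue_messages :: "nat \<Rightarrow> nat \<Rightarrow> nat \<Rightarrow> nat" where
  "residue_messages m j a = residue_code (j - 1) m (a - 1)"

lemma solves_residue_protocol:
  assumes "M \<le> 6 ^ m" "(3::nat) ^ m \<le> 2 ^ b"
  shows "solves_MEQ_AD 3 M (cycle_protocol b (residue_messages m)) (cycle_output b (residue_messages m))"
proof (rule solves_cycle_protocol)
  show "residue_messages m j a < 2 ^ b" for j a
    using residue_code_less assms(2) unfolding residue_messages_def by (rule less_le_trans)
  fix a\<^sub>1 a\<^sub>2 a\<^sub>3 :: nat
  assume inputs: "a\<^sub>1 \<in> {1..M}" "a\<^sub>2 \<in> {1..M}" "a\<^sub>3 \<in> {1..M}"
    and "residue_messages m 1 a\<^sub>1 = residue_messages m 1 a\<^sub>2"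
      "residue_messages m 2 a\<^sub>2 = residue_messages m 2 a\<^sub>3"
      "residue_messages m 3 a\<^sub>3 = residue_messages m 3 a\<^sub>1"
  with assms(1) have "a\<^sub>1 - 1 = a\<^sub>2 - 1 \<and> a\<^sub>2 - 1 = a\<^sub>3 - 1"
    by (intro residue_code_separating) (auto simp: residue_messages_def)
  with inputs show "a\<^sub>1 = a\<^sub>2 \<and> a\<^sub>2 = a\<^sub>3" by auto
qed

section \<open>Counting the bits\<close>

lemma pow_le_pow_if_log_le:
  fixes A B k n :: nat
  assumes "1 < B" "0 < A" "real k * log B A \<le> real n"
  shows "A ^ k \<le> B ^ n"
proof -
  have "real A ^ k = (B powr log B A) powr k" using assms(1,2) by (simp add: powr_realpow)
  also have "\<dots> = B powr (real k * log B A)" by (simp add: powr_powr mult.commute)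
  also have "\<dots> \<le> B powr real n" using assms(1,3) by simp
  also have "\<dots> = real B ^ n" using assms(1) by (simp add: powr_realpow)
  finally show ?thesis by (simp flip: of_nat_power)
qed

lemma log_2_3_less: "log 2 3 < (1.585 :: real)"
proof -
  have "200 * log 2 3 = log 2 ((3::real) ^ 200)" by (subst log_nat_power) auto
  also have "\<dots> < log 2 (2 ^ 317)" by (rule log_less) simp_all
  also have "log 2 ((2::real) ^ 317) = 317" by (subst log_pow_cancel) auto
  finally show ?thesis by simp
qed

lemma log_6_2_eq: "log 6 2 = 1 / (1 + log 2 (3 :: real))"
proof -
  have "log 6 2 = 1 / log 2 (6::real)" by (simp add: log_def)
  moreover have "log 2 (6::real) = 1 + log 2 3" using log_mult[of 2 2 3] by simp
  ultimately show ?thesis by simp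
qed

lemma bit_count_less:
  "3 * real_of_int \<lceil>of_int \<lceil>real k * log 6 2\<rceil> * log 2 3\<rceil> < 1.840 * real k + 7.755"
proof -
  define l :: real where "l = log 2 3"
  define \<mu> :: real where "\<mu> = of_int \<lceil>real k * log 6 2\<rceil>"
  have l: "0 < l" "l < 1.585" using log_2_3_less by (simp_all add: l_def)
  have "\<mu> < real k * log 6 2 + 1" unfolding \<mu>_def by linarith
  then have "\<mu> * l < (real k * log 6 2 + 1) * l" using l(1) by (rule mult_strict_right_mono)
  moreover have "3 * (log 6 2 * l) \<le> 1.84"
  proof -
    have "3 * l \<le> 1.84 * (1 + l)" using l by simp
    then have "3 * l / (1 + l) \<le> 1.84" using l by (simp add: divide_le_eq)
    then show ?thesis by (simp add: log_6_2_eq flip: l_def)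
  qed
  then have "real k * (3 * (log 6 2 * l)) \<le> real k * 1.84" by (rule mult_left_mono) simp
  moreover have "real_of_int \<lceil>\<mu> * l\<rceil> < \<mu> * l + 1" by linarith
  ultimately have "3 * real_of_int \<lceil>\<mu> * l\<rceil> < 1.840 * real k + 7.755"
    using l by (simp add: algebra_simps)
  then show ?thesis by (simp add: \<mu>_def l_def)
qed

theorem mainTheorem11:
  fixes k :: nat
  assumes "k \<ge> 1"
  shows "\<exists>P EQ. solves_MEQ_AD 3 (2 ^ k) P EQ \<and>
     int (length P) = 3 * \<lceil>of_int \<lceil>real k * log 6 2\<rceil> * log 2 3\<rceil> \<and>
     real (length P) < 1.840 * real k + 7.755"
proof -
  define m where "m = nat \<lceil>real k * log 6 2\<rceil>"
  define b where "b = nat \<lceil>real m * log 2 3\<rceil>"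
  have m: "real m = of_int \<lceil>real k * log 6 2\<rceil>" by (simp add: m_def)
  have "0 \<le> real m * log 2 3" by simp
  then have b: "int b = \<lceil>of_int \<lceil>real k * log 6 2\<rceil> * log 2 3\<rceil>"
    unfolding b_def m[symmetric] by linarith
  have "(2::nat) ^ k \<le> 6 ^ m" by (rule pow_le_pow_if_log_le) (simp_all add: m)
  moreover have "(3::nat) ^ m \<le> 2 ^ b" by (rule pow_le_pow_if_log_le) (simp_all add: b_def)
  ultimately have "solves_MEQ_AD 3 (2 ^ k) (cycle_protocol b (residue_messages m))
      (cycle_output b (residue_messages m))"
    by (rule solves_residue_protocol)
  with b bit_count_less[of k] show ?thesis
    by (intro exI[of _ "cycle_protocol b (residue_messages m)"] exI)
      (simp add: length_cycle_protocol flip: b)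
qed

end
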